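(* Let $C>0$, $a>1$, $m>0$ and $m'<ma$. Let $Y:\mathbb{R}_+\to\mathbb{R}_+$ be a $\mathcal{C}^1$ function satisfying $$\frac{d}{dt}Y+\frac{a}{1+t}Y\leq C\left(\frac{Y}{(1+t)^2}+Y^2+(1+t)^{m'-1}Y^{m+1}\right)\quad\text{on }\mathbb{R}_+.$$ Then there exists $c=c(a,m,m',C)>0$ such that if $Y(0)\leq c$, then $$Y(t)\leq 2e^{\frac{Ct}{1+t}}\frac{Y(0)}{(1+t)^a}\quad\text{for all }t\geq0.$$ *)

theory Defs
  imports "HOL-Analysis.Analysis"
begin

end

theory Submission imports Defs begin

text \<open>
  The weight \<open>W(t) = (1 + t)^a exp(-C t/(1 + t))\<close> satisfies
  \<open>W' = W (a/(1 + t) - C/(1 + t)^2)\<close>, so it absorbs both linear terms and \<open>Z = W Y\<close> obeys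
  \<open>Z' \<le> C W (Y^2 + (1 + t)^(m'-1) Y^(m+1))\<close>. Since \<open>W(t) \<ge> e^-C (1 + t)^a\<close>, as long as
  \<open>Z \<le> 2w\<close> we have \<open>Y \<le> 2 e^C w (1 + t)^-a\<close>, and then \<open>Z'\<close> is bounded by a superlinear
  function of \<open>w\<close> times \<open>(1 + t)^-p\<close> with \<open>p = min a (m a - m' + 1) > 1\<close>. This is integrable,
  with integral at most \<open>w/2\<close> for small \<open>w\<close>, so by a continuity argument \<open>Z\<close> never reaches
  \<open>2w\<close> if \<open>Y(0) \<le> w\<close>; letting \<open>w\<close> decrease to \<open>Y(0)\<close> gives \<open>Z \<le> 2 Y(0)\<close>.
\<close>

definition damping_weight :: "real \<Rightarrow> real \<Rightarrow> real \<Rightarrow> real" where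
  "damping_weight C a t = (1 + t) powr a * exp (-(C * t / (1 + t)))"

lemma damping_weight_pos: "t > -1 \<Longrightarrow> damping_weight C a t > 0"
  by (simp add: damping_weight_def)

lemma damping_weight_0 [simp]: "damping_weight C a 0 = 1"
  by (simp add: damping_weight_def)

lemma has_real_derivative_damping_weight:
  assumes "t > -1"
  shows "(damping_weight C a has_real_derivative
           damping_weight C a t * (a / (1 + t) - C / (1 + t)^2)) (at t)"
proof -
  have t1: "1 + t > 0" using assms by simp
  have d1: "((\<lambda>s. 1 + s) has_real_derivative 1) (at t)"
    by (auto intro!: derivative_eq_intros)
  have dpow: "((\<lambda>s. (1 + s) powr a) has_real_derivative a * (1 + t) powr (a - 1)) (at t)"
    using DERIV_fun_powr[OF d1, of a] t1 by simp
  have dquot: "((\<lambda>s. C * s / (1 + s)) has_real_derivative C / (1 + t)^2) (at t)"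
    using t1 by (auto intro!: derivative_eq_intros simp: field_simps power2_eq_square)
  note dexp = DERIV_fun_exp[OF DERIV_minus[OF dquot]]
  show ?thesis
    unfolding damping_weight_def[abs_def]
    by (rule DERIV_cong[OF DERIV_mult[OF dpow dexp]])
       (use t1 in \<open>simp add: powr_diff field_simps\<close>)
qed

lemma has_real_derivative_damped:
  assumes "t > -1" "(Y has_real_derivative y') (at t)"
  shows "((\<lambda>s. damping_weight C a s * Y s) has_real_derivative
           damping_weight C a t * (y' + a / (1 + t) * Y t - C / (1 + t)^2 * Y t)) (at t)"
  by (rule DERIV_cong[OF DERIV_mult[OF has_real_derivative_damping_weight[OF assms(1)] assms(2)]])
     (simp add: algebra_simps)

lemma damping_weight_mult_le_iff:
  assumes "t > -1"
  shows "damping_weight C a t * y \<le> b \<longleftrightarrow> y \<le> exp (C * t / (1 + t)) * b / (1 + t) powr a"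
proof -
  let ?E = "exp (C * t / (1 + t))" and ?P = "(1 + t) powr a"
  have "?P > 0" using assms by simp
  have "y \<le> ?E * b / ?P \<longleftrightarrow> y * ?P \<le> ?E * b"
    using \<open>?P > 0\<close> by (simp add: pos_le_divide_eq)
  also have "\<dots> \<longleftrightarrow> y * ?P / ?E \<le> b"
    by (simp add: pos_divide_le_eq mult.commute)
  also have "y * ?P / ?E = damping_weight C a t * y"
    by (simp add: damping_weight_def exp_minus divide_inverse)
  finally show ?thesis by simp
qed

lemma le_of_damping_weight_le:
  assumes "C \<ge> 0" "t \<ge> 0" "y \<ge> 0" "damping_weight C a t * y \<le> b"
  shows "y \<le> exp C * b * (1 + t) powr (-a)"
proof -
  have "C * t / (1 + t) \<le> C"
    using assms(1,2) by (simp add: field_simps)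
  then have exp_le: "exp (C * t / (1 + t)) \<le> exp C" by simp
  have "0 \<le> damping_weight C a t * y"
    using assms(2,3) damping_weight_pos[of t C a] by simp
  then have b0: "b \<ge> 0" using assms(4) by linarith
  have "y \<le> exp (C * t / (1 + t)) * b / (1 + t) powr a"
    using assms(2,4) damping_weight_mult_le_iff by simp
  also have "\<dots> \<le> exp C * b / (1 + t) powr a"
    using exp_le b0 by (intro divide_right_mono mult_right_mono) auto
  finally show ?thesis by (simp add: powr_minus divide_inverse)
qed

lemma power_sum_decay_le:
  fixes u y v a m m' p :: real
  assumes "u \<ge> 1" "y \<ge> 0" "y \<le> v * u powr (-a)" "m + 1 \<ge> 0"
    "p \<le> a" "p \<le> m * a - m' + 1"
  shows "u powr a * (y^2 + u powr (m' - 1) * y powr (m + 1))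
           \<le> (v^2 + v powr (m + 1)) * u powr (-p)"
proof -
  have "0 \<le> v * u powr (-a)" using assms(2,3) by linarith
  then have v0: "v \<ge> 0"
    using assms(1) by (simp add: zero_le_mult_iff)
  have sq: "y^2 \<le> v^2 * u powr (-2 * a)"
  proof -
    have "y^2 \<le> (v * u powr (-a))^2" using assms(2,3) by (intro power_mono)
    also have "\<dots> = v^2 * u powr (-2 * a)"
      using assms(1) by (simp add: power_mult_distrib powr_realpow[symmetric] powr_powr mult.commute)
    finally show ?thesis .
  qed
  have pw: "y powr (m + 1) \<le> v powr (m + 1) * u powr (-a * (m + 1))"
  proof -
    have "y powr (m + 1) \<le> (v * u powr (-a)) powr (m + 1)"
      using assms(2-4) by (intro powr_mono2)
    also have "\<dots> = v powr (m + 1) * u powr (-a * (m + 1))"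
      using v0 by (simp add: powr_mult powr_powr)
    finally show ?thesis .
  qed
  have "u powr a * (y^2 + u powr (m' - 1) * y powr (m + 1))
      \<le> u powr a * (v^2 * u powr (-2 * a) + u powr (m' - 1) * (v powr (m + 1) * u powr (-a * (m + 1))))"
    using sq pw by (intro mult_left_mono add_mono) auto
  also have "\<dots> = v^2 * (u powr a * u powr (-2 * a))
      + v powr (m + 1) * (u powr a * u powr (m' - 1) * u powr (-a * (m + 1)))"
    by (simp add: algebra_simps)
  also have "\<dots> = v^2 * u powr (-a) + v powr (m + 1) * u powr (m' - 1 - m * a)"
    by (simp add: powr_add[symmetric] algebra_simps)
  also have "\<dots> \<le> v^2 * u powr (-p) + v powr (m + 1) * u powr (-p)"
    using assms(1,5,6) by (intro add_mono mult_left_mono powr_mono) auto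
  finally show ?thesis by (simp add: algebra_simps)
qed

lemma damped_derivative_bound:
  fixes C a m m' p s y y' b :: real
  assumes "C \<ge> 0" "s \<ge> 0" "y \<ge> 0" "m + 1 \<ge> 0" "p \<le> a" "p \<le> m * a - m' + 1"
    "damping_weight C a s * y \<le> b"
    "y' + a / (1 + s) * y \<le> C * (y / (1 + s)^2 + y^2 + (1 + s) powr (m' - 1) * y powr (m + 1))"
  shows "damping_weight C a s * (y' + a / (1 + s) * y - C / (1 + s)^2 * y)
           \<le> C * ((exp C * b)^2 + (exp C * b) powr (m + 1)) * (1 + s) powr (-p)"
proof -
  let ?Q = "y^2 + (1 + s) powr (m' - 1) * y powr (m + 1)"
  have weight: "0 < damping_weight C a s" "damping_weight C a s \<le> (1 + s) powr a"
    using assms(1,2) by (auto simp: damping_weight_def mult_left_le intro: damping_weight_pos)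
  have "damping_weight C a s * (y' + a / (1 + s) * y - C / (1 + s)^2 * y)
      \<le> damping_weight C a s * (C * ?Q)"
    using assms(8) weight(1) by (intro mult_left_mono) (auto simp: algebra_simps)
  also have "\<dots> \<le> (1 + s) powr a * (C * ?Q)"
    using weight(2) assms(1,3) by (intro mult_right_mono) auto
  also have "\<dots> = C * ((1 + s) powr a * ?Q)" by simp
  also have "\<dots> \<le> C * ((exp C * b)^2 + (exp C * b) powr (m + 1)) * (1 + s) powr (-p)"
    using power_sum_decay_le[OF _ assms(3) le_of_damping_weight_le[OF assms(1-3,7)] assms(4-6)]
      assms(1,2) by (simp add: mult_left_mono mult.assoc)
  finally show ?thesis .
qed

lemma less_by_comparison:
  fixes Z F :: "real \<Rightarrow> real"
  assumes contZ: "continuous_on {0..} Z" and contF: "continuous_on {0..} F"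
    and derZ: "\<And>s. s > 0 \<Longrightarrow> (Z has_real_derivative Z' s) (at s)"
    and derF: "\<And>s. s > 0 \<Longrightarrow> (F has_real_derivative F' s) (at s)"
    and slower: "\<And>s. s > 0 \<Longrightarrow> Z s \<le> B \<Longrightarrow> Z' s \<le> F' s"
    and budget: "\<And>t. t \<ge> 0 \<Longrightarrow> Z 0 + (F t - F 0) < B"
    and "t \<ge> 0"
  shows "Z t < B"
proof (rule ccontr)
  assume "\<not> Z t < B"
  define S where "S = {s \<in> {0..t}. B \<le> Z s}"
  define T where "T = Inf S"
  \<comment> \<open>\<open>T\<close> is the first time \<open>Z\<close> reaches \<open>B\<close>; the mean value theorem for \<open>Z - F\<close> on \<open>[0, T]\<close> then contradicts the budget.\<close>
  have "closed S" unfolding S_def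
    by (intro continuous_on_closed_Collect_le continuous_on_subset[OF contZ]) (auto intro: continuous_intros)
  moreover have "t \<in> S" using \<open>t \<ge> 0\<close> \<open>\<not> Z t < B\<close> by (simp add: S_def)
  moreover have bdd: "bdd_below S" by (auto simp: S_def bdd_below_def)
  ultimately have "T \<in> S" unfolding T_def using closed_contains_Inf by blast
  then have "T \<ge> 0" and ZT: "B \<le> Z T" by (auto simp: S_def)
  have before_T: "Z s < B" if "0 \<le> s" "s < T" for s
  proof (rule ccontr)
    assume "\<not> Z s < B"
    then have "s \<in> S" using that \<open>T \<in> S\<close> by (auto simp: S_def)
    then have "T \<le> s" unfolding T_def using bdd by (rule cInf_lower)
    then show False using that by simp
  qed
  have "T > 0"
    using ZT budget[of 0] \<open>T \<ge> 0\<close> by (cases "T = 0") auto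
  define G where "G s = Z s - F s" for s
  have derG: "(G has_real_derivative Z' s - F' s) (at s)" if "s > 0" for s
    unfolding G_def[abs_def] using derZ[OF that] derF[OF that] by (rule DERIV_diff)
  have "continuous_on {0..T} G"
    unfolding G_def[abs_def]
    by (intro continuous_on_diff continuous_on_subset[OF contZ] continuous_on_subset[OF contF]) auto
  moreover have "G differentiable (at s)" if "0 < s" for s
    using derG[OF that] real_differentiable_def by blast
  ultimately obtain l z where z: "0 < z" "z < T"
    and "(G has_real_derivative l) (at z)" and mvt: "G T - G 0 = (T - 0) * l"
    using MVT[OF \<open>T > 0\<close>] by blast
  then have "l = Z' z - F' z" using DERIV_unique derG by blast
  have "Z' z \<le> F' z" using slower[OF z(1)] before_T[of z] z by simp
  then have "T * l \<le> 0" using \<open>l = Z' z - F' z\<close> \<open>T > 0\<close> by (simp add: mult_nonneg_nonpos)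
  then have "G T \<le> G 0" using mvt by simp
  then show False using ZT budget[OF \<open>T \<ge> 0\<close>] by (simp add: G_def)
qed

lemma small_superlinear_threshold:
  fixes B K m :: real
  assumes "B > 0" "K > 0" "m > 0"
  shows "\<exists>c>0. \<forall>w. 0 < w \<longrightarrow> w \<le> c \<longrightarrow> B * ((K * w)^2 + (K * w) powr (m + 1)) \<le> w / 2"
proof -
  define \<delta> where "\<delta> = 1 / (4 * B * K)"
  have "\<delta> > 0" using assms by (simp add: \<delta>_def)
  show ?thesis
  proof (intro exI[of _ "min \<delta> (\<delta> powr (1 / m)) / K"] conjI allI impI)
    show "min \<delta> (\<delta> powr (1 / m)) / K > 0" using \<open>\<delta> > 0\<close> assms(2) by simp
    fix w :: real
    assume "0 < w" "w \<le> min \<delta> (\<delta> powr (1 / m)) / K"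
    define v where "v = K * w"
    have "v > 0" "v \<le> \<delta>" "v \<le> \<delta> powr (1 / m)"
      using \<open>0 < w\<close> \<open>w \<le> _\<close> assms(2) by (simp_all add: v_def field_simps)
    have "v powr m \<le> (\<delta> powr (1 / m)) powr m"
      using \<open>v > 0\<close> \<open>v \<le> \<delta> powr (1 / m)\<close> assms(3) by (intro powr_mono2) auto
    also have "\<dots> = \<delta>" using assms(3) \<open>\<delta> > 0\<close> by (simp add: powr_powr)
    finally have "v powr (m + 1) \<le> v * \<delta>"
      using \<open>v > 0\<close> by (simp add: powr_add)
    moreover have "v^2 \<le> v * \<delta>"
      using \<open>v > 0\<close> \<open>v \<le> \<delta>\<close> by (simp add: power2_eq_square)
    ultimately have "B * (v^2 + v powr (m + 1)) \<le> B * (2 * v * \<delta>)"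
      using assms(1) by (intro mult_left_mono) auto
    also have "\<dots> = w / 2"
      using assms(1,2) by (simp add: v_def \<delta>_def field_simps)
    finally show "B * ((K * w)^2 + (K * w) powr (m + 1)) \<le> w / 2" by (simp add: v_def)
  qed
qed

locale damped_differential_inequality =
  fixes C a m m' p :: real and Y Y' :: "real \<Rightarrow> real"
  assumes C_nonneg: "C \<ge> 0"
    and m_ge: "m + 1 \<ge> 0"
    and p_gt_1: "p > 1" and p_le_a: "p \<le> a" and p_le: "p \<le> m * a - m' + 1"
    and nonneg: "\<And>t. t \<ge> 0 \<Longrightarrow> Y t \<ge> 0"
    and deriv: "\<And>t. t \<ge> 0 \<Longrightarrow> (Y has_real_derivative Y' t) (at t within {0..})"
    and ineq: "\<And>t. t \<ge> 0 \<Longrightarrow> Y' t + a / (1 + t) * Y t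
                 \<le> C * (Y t / (1 + t)^2 + (Y t)^2 + (1 + t) powr (m' - 1) * (Y t) powr (m + 1))"
begin

lemma damped_below_twice:
  assumes "w > 0" "Y 0 \<le> w"
    and small: "C / (p - 1) * ((2 * exp C * w)^2 + (2 * exp C * w) powr (m + 1)) \<le> w / 2"
    and "t \<ge> 0"
  shows "damping_weight C a t * Y t < 2 * w"
proof -
  define A where "A = C * ((2 * exp C * w)^2 + (2 * exp C * w) powr (m + 1))"
  define F where "F s = A / (p - 1) * (1 - (1 + s) powr (1 - p))" for s
  \<comment> \<open>the antiderivative of \<open>A (1 + s)^-p\<close> vanishing at \<open>0\<close>; it stays below \<open>A/(p - 1)\<close>\<close>
  have "A / (p - 1) \<le> w / 2" using small by (simp add: A_def)
  have derY: "(Y has_real_derivative Y' s) (at s)" if "s > 0" for s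
  proof -
    have "(Y has_real_derivative Y' s) (at s within {0<..})"
      using deriv[of s] that by (rule_tac DERIV_subset) auto
    moreover have "at s within {0<..} = at s" using that by (intro at_within_open) auto
    ultimately show ?thesis by simp
  qed
  have "continuous_on {0..} Y"
    using deriv by (intro DERIV_continuous_on) auto
  then have contZ: "continuous_on {0..} (\<lambda>s. damping_weight C a s * Y s)"
    unfolding damping_weight_def by (intro continuous_intros) auto
  have contF: "continuous_on {0..} F"
    unfolding F_def by (intro continuous_intros) auto
  have derZ: "((\<lambda>s. damping_weight C a s * Y s) has_real_derivative
      damping_weight C a s * (Y' s + a / (1 + s) * Y s - C / (1 + s)^2 * Y s)) (at s)" if "s > 0" for s
    using that by (intro has_real_derivative_damped derY) auto
  have derF: "(F has_real_derivative A * (1 + s) powr (-p)) (at s)" if "s > 0" for s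
  proof -
    have "((\<lambda>s. 1 + s) has_real_derivative 1) (at s)"
      by (auto intro!: derivative_eq_intros)
    from DERIV_fun_powr[OF this, of "1 - p"]
    have "((\<lambda>s. (1 + s) powr (1 - p)) has_real_derivative (1 - p) * (1 + s) powr (- p)) (at s)"
      using that by simp
    then have "(F has_real_derivative A / (p - 1) * (0 - (1 - p) * (1 + s) powr (- p))) (at s)"
      unfolding F_def[abs_def] by (intro DERIV_cmult DERIV_diff DERIV_const)
    then show ?thesis
      by (rule DERIV_cong) (use p_gt_1 in \<open>simp add: field_simps\<close>)
  qed
  have slower: "damping_weight C a s * (Y' s + a / (1 + s) * Y s - C / (1 + s)^2 * Y s)
      \<le> A * (1 + s) powr (-p)" if "s > 0" "damping_weight C a s * Y s \<le> 2 * w" for s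
  proof -
    have "s \<ge> 0" using that(1) by simp
    from damped_derivative_bound[OF C_nonneg this nonneg[OF this] m_ge p_le_a p_le that(2) ineq[OF this]]
    show ?thesis by (simp add: A_def mult_ac)
  qed
  have budget: "Y 0 + (F s - F 0) < 2 * w" if "s \<ge> 0" for s
  proof -
    have "A \<ge> 0" using C_nonneg by (simp add: A_def)
    then have "F s \<le> A / (p - 1)"
      using p_gt_1 by (simp add: F_def right_diff_distrib)
    then show ?thesis using \<open>Y 0 \<le> w\<close> \<open>A / (p - 1) \<le> w / 2\<close> \<open>w > 0\<close> by (simp add: F_def)
  qed
  show ?thesis
    using less_by_comparison[where Z="\<lambda>s. damping_weight C a s * Y s" and F=F
        and Z'="\<lambda>s. damping_weight C a s * (Y' s + a / (1 + s) * Y s - C / (1 + s)^2 * Y s)"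
        and F'="\<lambda>s. A * (1 + s) powr (-p)", OF contZ contF derZ derF slower _ \<open>t \<ge> 0\<close>]
      budget by simp
qed


lemma damped_le_twice_initial:
  assumes threshold: "\<forall>w. 0 < w \<longrightarrow> w \<le> c \<longrightarrow>
      C / (p - 1) * ((2 * exp C * w)^2 + (2 * exp C * w) powr (m + 1)) \<le> w / 2"
    and "Y 0 < c" "t \<ge> 0"
  shows "damping_weight C a t * Y t \<le> 2 * Y 0"
proof -
  have "damping_weight C a t * Y t / 2 \<le> Y 0"
  proof (rule dense_ge_bounded[OF \<open>Y 0 < c\<close>])
    fix w
    assume "Y 0 < w" "w < c"
    moreover have "Y 0 \<ge> 0" using nonneg by simp
    ultimately have "w > 0" "Y 0 \<le> w" by simp_all
    moreover have "C / (p - 1) * ((2 * exp C * w)^2 + (2 * exp C * w) powr (m + 1)) \<le> w / 2"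
      using threshold \<open>w > 0\<close> \<open>w < c\<close> by simp
    ultimately have "damping_weight C a t * Y t < 2 * w"
      using \<open>t \<ge> 0\<close> by (rule damped_below_twice)
    then show "damping_weight C a t * Y t / 2 \<le> w" by simp
  qed
  then show ?thesis by simp
qed

end

theorem lemmaA1:
  fixes C a m m' :: real
  assumes "C > 0" and "a > 1" and "m > 0" and "m' < m * a"
  shows "\<exists>c>0. \<forall>(Y::real \<Rightarrow> real) Y'.
           (\<forall>t\<ge>0. Y t \<ge> 0)
         \<longrightarrow> (\<forall>t\<ge>0. (Y has_real_derivative Y' t) (at t within {0..}))
         \<longrightarrow> continuous_on {0..} Y'
         \<longrightarrow> (\<forall>t\<ge>0. Y' t + a / (1 + t) * Y t
                 \<le> C * (Y t / (1 + t)^2 + (Y t)^2 + (1 + t) powr (m' - 1) * (Y t) powr (m + 1)))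
         \<longrightarrow> Y 0 \<le> c
         \<longrightarrow> (\<forall>t\<ge>0. Y t \<le> 2 * exp (C * t / (1 + t)) * Y 0 / (1 + t) powr a)"
proof -
  define p where "p = min a (m * a - m' + 1)"
  have "p > 1" using assms(2,4) by (simp add: p_def mult.commute)
  then obtain c where "c > 0" and threshold: "\<forall>w. 0 < w \<longrightarrow> w \<le> c \<longrightarrow>
      C / (p - 1) * ((2 * exp C * w)^2 + (2 * exp C * w) powr (m + 1)) \<le> w / 2"
    using small_superlinear_threshold[of "C / (p - 1)" "2 * exp C" m] assms(1,3) by auto
  show ?thesis
  proof (intro exI[of _ "c / 2"] conjI allI impI)
    fix Y Y' :: "real \<Rightarrow> real" and t :: real
    assume nonneg: "\<forall>t\<ge>0. Y t \<ge> 0"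
      and deriv: "\<forall>t\<ge>0. (Y has_real_derivative Y' t) (at t within {0..})"
      and ineq: "\<forall>t\<ge>0. Y' t + a / (1 + t) * Y t
         \<le> C * (Y t / (1 + t)^2 + (Y t)^2 + (1 + t) powr (m' - 1) * (Y t) powr (m + 1))"
      and "Y 0 \<le> c / 2" "t \<ge> 0"
    interpret damped_differential_inequality C a m m' p Y Y'
      by unfold_locales (use assms \<open>p > 1\<close> nonneg deriv ineq in \<open>simp_all add: p_def\<close>)
    have "damping_weight C a t * Y t \<le> 2 * Y 0"
      using damped_le_twice_initial[OF threshold] \<open>Y 0 \<le> c / 2\<close> \<open>c > 0\<close> \<open>t \<ge> 0\<close> by simp
    then show "Y t \<le> 2 * exp (C * t / (1 + t)) * Y 0 / (1 + t) powr a"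
      using damping_weight_mult_le_iff[of t] \<open>t \<ge> 0\<close> by (simp add: mult_ac)
  qed (use \<open>c > 0\<close> in simp)
qed

end
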